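(* For every cap-cup cycle $c$ with $T(c) = \pm 2$, there exists a knot diagram $f \in \mathbb{CC}$ whose string diagram has no crossings (braidings) and such that $\mathrm{ccc}(f) = c$.
   Context: $\mathbb{CC}$ is the free (strict) braided monoidal category generated by objects $\uparrow, \downarrow$ and four generating morphisms, with no equations imposed between them: caps $\mathrm{cap}_r : I \to \uparrow \otimes \downarrow$, $\mathrm{cap}_l : I \to \downarrow \otimes \uparrow$ and cups $\mathrm{cup}_r : \downarrow \otimes \uparrow \to I$, $\mathrm{cup}_l : \uparrow \otimes \downarrow \to I$. Wires labelled $\uparrow$ / $\downarrow$ are regarded as oriented (upwards/downwards), so a morphism is an oriented diagram. A knot (diagram) in $\mathbb{CC}$ is a morphism $I \to I$ whose string diagram has a single connected component. The turning numbers of the generators are $t(\mathrm{cap}_r) = +1$, $t(\mathrm{cap}_l) = -1$, $t(\mathrm{cup}_r) = -1$, $t(\mathrm{cup}_l) = +1$. A cap-cup cycle is a finite sequence of elements of $\{\mathrm{cap}_l, \mathrm{cap}_r, \mathrm{cup}_l, \mathrm{cup}_r\}$, considered up to cyclic permutation, in which caps and cups alternate; its turning number $T(c)$ is the sum of the turning numbers of its elements. For a knot $f \in \mathbb{CC}$, its cap-cup cycle $\mathrm{ccc}(f)$ is obtained by starting at any point of the strand, following the strand in the direction given by its orientation, and recording the caps and cups encountered until returning to the start. *)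

theory Defs
  imports Main
begin

text \<open>Generators of CC other than the braiding.  Objects of CC are words in
  up/down; we encode them as bool lists, True = up-arrow, False = down-arrow.\<close>

datatype gen = CapL | CapR | CupL | CupR

fun is_cap :: "gen \<Rightarrow> bool" where
  "is_cap CapL = True" | "is_cap CapR = True" | "is_cap CupL = False" | "is_cap CupR = False"

fun gdom :: "gen \<Rightarrow> bool list" where
  "gdom CapL = []" | "gdom CapR = []" | "gdom CupL = [True, False]" | "gdom CupR = [False, True]"

fun gcod :: "gen \<Rightarrow> bool list" where
  "gcod CapL = [False, True]" | "gcod CapR = [True, False]" | "gcod CupL = []" | "gcod CupR = []"

fun turn :: "gen \<Rightarrow> int" where
  "turn CapR = 1" | "turn CapL = -1" | "turn CupR = -1" | "turn CupL = 1"

text \<open>Cap-cup cycles (as representative lists; equality is up to rotation) and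
  their turning number.  Alternation is required cyclically.\<close>

definition cap_cup_cycle :: "gen list \<Rightarrow> bool" where
  "cap_cup_cycle c \<longleftrightarrow>
     (\<forall>i < length c. is_cap (c ! i) \<longleftrightarrow> \<not> is_cap (c ! ((i + 1) mod length c)))"

definition T :: "gen list \<Rightarrow> int" where
  "T c = sum_list (map turn c)"

text \<open>A crossing-free morphism of CC is a composite of layers
  id_w1 (x) g (x) id_w2 with g a cap/cup; a layer is recorded as (length w1, g).
  A diagram is a list of layers, read bottom to top.\<close>

type_synonym layer = "nat \<times> gen"

fun apply_layer :: "layer \<Rightarrow> bool list \<Rightarrow> bool list option" where
  "apply_layer (k, g) w =
     (if k + length (gdom g) \<le> length w \<and> take (length (gdom g)) (drop k w) = gdom g
      then Some (take k w @ gcod g @ drop (k + length (gdom g)) w) else None)"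

fun apply_diag :: "layer list \<Rightarrow> bool list \<Rightarrow> bool list option" where
  "apply_diag [] w = Some w"
| "apply_diag (l # ls) w = (case apply_layer l w of None \<Rightarrow> None | Some w' \<Rightarrow> apply_diag ls w')"

definition endo_I :: "layer list \<Rightarrow> bool" where
  "endo_I d \<longleftrightarrow> apply_diag d [] = Some []"

text \<open>Following a wire (at position p) through a list of layers until it hits a
  generator that absorbs it (cups when travelling upwards, caps when travelling
  downwards); returns the number of layers passed before hitting it.\<close>

fun trace :: "(gen \<Rightarrow> bool) \<Rightarrow> layer list \<Rightarrow> nat \<Rightarrow> nat option" where
  "trace absorbs [] p = None"
| "trace absorbs ((k, g) # ls) p =
     (if absorbs g then
        (if p = k \<or> p = k + 1 then Some 0
         else map_option Suc (trace absorbs ls (if p > k + 1 then p - 2 else p)))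
      else map_option Suc (trace absorbs ls (if p \<ge> k then p + 2 else p)))"

text \<open>Following the orientation of the strand: from a cap the strand leaves along
  its up-oriented leg (upwards); from a cup it leaves along its down-oriented leg
  (downwards).  next_gen d i is the layer of the next cap/cup met.\<close>

definition next_gen :: "layer list \<Rightarrow> nat \<Rightarrow> nat" where
  "next_gen d i = (case d ! i of (k, g) \<Rightarrow>
     (case g of
        CapR \<Rightarrow> i + 1 + the (trace (\<lambda>h. \<not> is_cap h) (drop (i + 1) d) k)
      | CapL \<Rightarrow> i + 1 + the (trace (\<lambda>h. \<not> is_cap h) (drop (i + 1) d) (k + 1))
      | CupR \<Rightarrow> i - 1 - the (trace is_cap (rev (take i d)) k)
      | CupL \<Rightarrow> i - 1 - the (trace is_cap (rev (take i d)) (k + 1))))"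

definition knot :: "layer list \<Rightarrow> bool" where
  "knot d \<longleftrightarrow> endo_I d \<and> d \<noteq> [] \<and>
     (\<forall>j < length d. \<exists>m. (next_gen d ^^ m) 0 = j)"

definition ccc_list :: "layer list \<Rightarrow> gen list" where
  "ccc_list d = map (\<lambda>m. snd (d ! ((next_gen d ^^ m) 0))) [0..<length d]"

definition ccc_eq :: "layer list \<Rightarrow> gen list \<Rightarrow> bool" where
  "ccc_eq d c \<longleftrightarrow> (\<exists>r. rotate r (ccc_list d) = c)"

end

theory Submission
  imports Defs
begin

text \<open>Rotate the cycle so that it starts with a cap whose turning number is half of T(c); such a
  cap exists because caps and cups alternate.  What remains is the cap-cup word of an open strand
  that starts and ends with a cup and has turning number 1 or -1.  Every such word is read off an
  arc, a crossing-free tangle closing two adjacent wires: splitting the word at a suitable cap gives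
  two shorter words of turning number 1 or -1 (a discrete intermediate value argument on prefix
  sums), and the arcs obtained for them by induction are stacked on top of the cap, one of them
  joining a leg of the cap to one of the two endpoint wires.  Finally a cap at the very bottom
  closes the arc into a knot.\<close>

section \<open>Following a strand through the layers\<close>

abbreviation is_cup :: "gen \<Rightarrow> bool" where
  "is_cup g \<equiv> \<not> is_cap g"

text \<open>The position at which a wire followed by \<^const>\<open>trace\<close> leaves the far end of the layers,
  provided it is not absorbed.\<close>

fun trace_pos :: "(gen \<Rightarrow> bool) \<Rightarrow> layer list \<Rightarrow> nat \<Rightarrow> nat" where
  "trace_pos absorbs [] p = p"
| "trace_pos absorbs ((k, g) # ls) p =
     (if absorbs g then trace_pos absorbs ls (if p > k + 1 then p - 2 else p)
      else trace_pos absorbs ls (if p \<ge> k then p + 2 else p))"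

lemma trace_append:
  "trace absorbs (xs @ ys) p = (case trace absorbs xs p of
       Some n \<Rightarrow> Some n
     | None \<Rightarrow> map_option ((+) (length xs)) (trace absorbs ys (trace_pos absorbs xs p)))"
  by (induction absorbs xs p rule: trace.induct) (auto split: option.splits simp: map_option_case)

lemma trace_pos_append: "trace_pos absorbs (xs @ ys) p = trace_pos absorbs ys (trace_pos absorbs xs p)"
  by (induction absorbs xs p rule: trace_pos.induct) auto

lemma trace_less_length: "trace absorbs ls p = Some t \<Longrightarrow> t < length ls"
  by (induction absorbs ls p arbitrary: t rule: trace.induct) (auto split: if_splits)

lemma apply_diag_append:
  "apply_diag (xs @ ys) w = (case apply_diag xs w of None \<Rightarrow> None | Some w' \<Rightarrow> apply_diag ys w')"
  by (induction xs w rule: apply_diag.induct) (auto split: option.splits)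

fun out_leg :: "layer \<Rightarrow> nat" where
  "out_leg (k, CapR) = k" | "out_leg (k, CupR) = k"
| "out_leg (k, CapL) = k + 1" | "out_leg (k, CupL) = k + 1"

text \<open>\<^const>\<open>next_gen\<close> without its junk value: None when the strand leaves the diagram.\<close>

definition next_layer :: "layer list \<Rightarrow> nat \<Rightarrow> nat option" where
  "next_layer d i = (if is_cap (snd (d ! i))
     then map_option (\<lambda>t. i + 1 + t) (trace is_cup (drop (i + 1) d) (out_leg (d ! i)))
     else map_option (\<lambda>t. i - 1 - t) (trace is_cap (rev (take i d)) (out_leg (d ! i))))"

lemma next_gen_eq: "next_layer d i = Some j \<Longrightarrow> next_gen d i = j"
  unfolding next_layer_def next_gen_def
  by (cases "d ! i"; cases "snd (d ! i)") (auto split: if_splits)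

lemma next_layer_cap:
  "is_cap (snd (d ! i)) \<Longrightarrow> trace is_cup (drop (Suc i) d) (out_leg (d ! i)) = Some t \<Longrightarrow>
    next_layer d i = Some (Suc (i + t))"
  unfolding next_layer_def by simp

lemma next_layer_embed:
  assumes "i < length A" "next_layer A i = Some j"
  shows "next_layer (B @ A @ C) (length B + i) = Some (length B + j)"
proof (cases "is_cap (snd (A ! i))")
  case True
  have "drop (length B + i + 1) (B @ A @ C) = drop (i + 1) A @ C"
    using assms(1) by simp
  with True assms show ?thesis
    unfolding next_layer_def by (auto simp: nth_append trace_append split: option.splits)
next
  case False
  have "take (length B + i) (B @ A @ C) = B @ take i A"
    using assms(1) by simp
  moreover from False assms obtain t where t: "trace is_cap (rev (take i A)) (out_leg (A ! i)) = Some t"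
    and "j = i - 1 - t"
    unfolding next_layer_def by auto
  moreover have "t < i" using trace_less_length[OF t] assms(1) by simp
  ultimately show ?thesis
    using False assms unfolding next_layer_def by (auto simp: nth_append trace_append)
qed

lemma next_layer_leave:
  assumes "i < length A" "is_cup (snd (A ! i))" "trace is_cap (rev (take i A)) (out_leg (A ! i)) = None"
  shows "next_layer (B @ A @ C) (length B + i) =
    map_option (\<lambda>t. length B - 1 - t)
      (trace is_cap (rev B) (trace_pos is_cap (rev (take i A)) (out_leg (A ! i))))"
proof -
  have "take (length B + i) (B @ A @ C) = B @ take i A"
    using assms(1) by simp
  with assms show ?thesis
    unfolding next_layer_def by (auto simp: nth_append trace_append map_option_case split: option.splits)
qed

abbreviation strand :: "layer list \<Rightarrow> nat list \<Rightarrow> bool" where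
  "strand d L \<equiv> successively (\<lambda>i j. next_layer d i = Some j) L"

lemma strand_embed:
  assumes "strand A L" "set L \<subseteq> {..<length A}"
  shows "strand (B @ A @ C) (map ((+) (length B)) L)"
  unfolding successively_map
  by (rule successively_mono[OF assms(1)]) (use assms(2) next_layer_embed in auto)

lemma funpow_next_gen_strand:
  assumes "strand d M" "M \<noteq> []" "m < length M"
  shows "(next_gen d ^^ m) (hd M) = M ! m"
  using assms(3)
proof (induction m)
  case 0
  then show ?case using assms(2) by (simp add: hd_conv_nth)
next
  case (Suc m)
  then show ?case
    using successively_nth[OF assms(1) Suc.prems] by (simp add: next_gen_eq)
qed

section \<open>Arcs\<close>

definition arc_typed :: "layer list \<Rightarrow> nat \<Rightarrow> bool list \<Rightarrow> bool" where
  "arc_typed A b w \<longleftrightarrow> (\<forall>u v. length u = b \<longrightarrow> apply_diag A (u @ w @ v) = Some (u @ v))"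

definition arc_transparent :: "layer list \<Rightarrow> nat \<Rightarrow> bool" where
  "arc_transparent A b \<longleftrightarrow>
     (\<forall>p < b. trace is_cup A p = None \<and> trace_pos is_cup A p = p) \<and>
     (\<forall>p > b + 1. trace is_cup A p = None \<and> trace_pos is_cup A p = p - 2) \<and>
     (\<forall>p. trace is_cap (rev A) p = None \<and> trace_pos is_cap (rev A) p = (if p < b then p else p + 2))"

definition arc_strand :: "layer list \<Rightarrow> nat \<Rightarrow> nat \<Rightarrow> nat list \<Rightarrow> gen list \<Rightarrow> bool" where
  "arc_strand A p_in p_out L s \<longleftrightarrow>
     length L = length A \<and> set L = {..<length A} \<and> L \<noteq> [] \<and>
     trace is_cup A p_in = Some (hd L) \<and> strand A L \<and>
     is_cup (snd (A ! last L)) \<and>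
     trace is_cap (rev (take (last L) A)) (out_leg (A ! last L)) = None \<and>
     trace_pos is_cap (rev (take (last L) A)) (out_leg (A ! last L)) = p_out \<and>
     map (\<lambda>i. snd (A ! i)) L = s"

text \<open>An arc at base b turns the boundary u @ [up, \<not> up] @ v with length u = b into u @ v.
  Its strand enters through the upward wire, visits every layer (in the order L, reading s) and
  leaves through the downward wire; all other wires pass straight through.\<close>

definition arc :: "layer list \<Rightarrow> nat \<Rightarrow> bool \<Rightarrow> nat list \<Rightarrow> gen list \<Rightarrow> bool" where
  "arc A b up L s \<longleftrightarrow> arc_typed A b [up, \<not> up] \<and> arc_transparent A b \<and>
     arc_strand A (b + of_bool (\<not> up)) (b + of_bool up) L s"

lemma arc_cup: "is_cup g \<Longrightarrow> gdom g = [up, \<not> up] \<Longrightarrow> arc [(b, g)] b up [0] [g]"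
  by (cases g) (auto simp: arc_def arc_typed_def arc_transparent_def arc_strand_def)

lemma arc_typed_join:
  assumes "arc_typed A1 b1 w1" "arc_typed A2 b w2" "b1 \<le> b + length w2"
    and "\<And>u v. length u = b \<Longrightarrow>
      apply_layer l (u @ w @ v) = Some (take b1 (u @ w2 @ v) @ w1 @ drop b1 (u @ w2 @ v))"
  shows "arc_typed (l # A1 @ A2) b w"
  unfolding arc_typed_def
proof (intro allI impI)
  fix u v :: "bool list"
  assume u: "length u = b"
  have "length (take b1 (u @ w2 @ v)) = b1"
    using assms(3) u by simp
  then have "apply_diag A1 (take b1 (u @ w2 @ v) @ w1 @ drop b1 (u @ w2 @ v)) = Some (u @ w2 @ v)"
    using assms(1) unfolding arc_typed_def by (metis append_take_drop_id)
  then show "apply_diag (l # A1 @ A2) (u @ w @ v) = Some (u @ v)"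
    using assms(2,4) u unfolding arc_typed_def by (simp add: apply_diag_append)
qed

lemma arc_transparentD:
  assumes "arc_transparent A b"
  shows "p < b \<Longrightarrow> trace is_cup A p = None" "p < b \<Longrightarrow> trace_pos is_cup A p = p"
    "b + 1 < p \<Longrightarrow> trace is_cup A p = None" "b + 1 < p \<Longrightarrow> trace_pos is_cup A p = p - 2"
    "trace is_cap (rev A) p = None" "trace_pos is_cap (rev A) p = (if p < b then p else p + 2)"
  using assms unfolding arc_transparent_def by auto

lemma arc_transparent_join:
  assumes A1: "arc_transparent A1 b1" and A2: "arc_transparent A2 b" and "is_cap g"
    and "b \<le> c" "c \<le> b + 2" "b \<le> b1" "b1 \<le> b + 2"
  shows "arc_transparent ((c, g) # A1 @ A2) b"
  unfolding arc_transparent_def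
  by (intro conjI allI impI)
    (use assms in \<open>simp_all add: trace_append trace_pos_append arc_transparentD[OF A1] arc_transparentD[OF A2]\<close>)

lemma arc_transparent_if_arc: "arc A b up L s \<Longrightarrow> arc_transparent A b"
  unfolding arc_def by simp

lemma arc_traces:
  assumes "arc A b up L s"
  shows "trace is_cup A (b + of_bool (\<not> up)) = Some (hd L)"
    "p < b \<Longrightarrow> trace is_cup A p = None" "p < b \<Longrightarrow> trace_pos is_cup A p = p"
    "b + 1 < p \<Longrightarrow> trace is_cup A p = None" "b + 1 < p \<Longrightarrow> trace_pos is_cup A p = p - 2"
    "trace is_cap (rev A) p = None" "trace_pos is_cap (rev A) p = (if p < b then p else p + 2)"
  using assms arc_transparentD[OF arc_transparent_if_arc[OF assms]]
  unfolding arc_def arc_strand_def by simp_all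

lemma arc_strand_join:
  assumes F: "arc_strand F pF qF LF sF" and S: "arc_strand S pS qS LS sS"
    and D: "D = BF @ F @ CF" "D = BS @ S @ CS"
    and len: "length D = Suc (length F + length S)"
    and cover: "insert 0 ((+) (length BF) ` {..<length F} \<union> (+) (length BS) ` {..<length S}) = {..<length D}"
    and enter: "trace is_cup D p_in = Some (length BF + hd LF)"
    and to_cap: "next_layer D (length BF + last LF) = Some 0"
    and from_cap: "next_layer D 0 = Some (length BS + hd LS)"
    and leave: "trace is_cap (rev BS) qS = None" "trace_pos is_cap (rev BS) qS = p_out"
  shows "arc_strand D p_in p_out
    (map ((+) (length BF)) LF @ [0] @ map ((+) (length BS)) LS) (sF @ [snd (D ! 0)] @ sS)"
proof -
  let ?MF = "map ((+) (length BF)) LF" and ?MS = "map ((+) (length BS)) LS"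
  from F have LF: "length LF = length F" "set LF = {..<length F}" "LF \<noteq> []" "strand F LF"
    "map (\<lambda>i. snd (F ! i)) LF = sF"
    unfolding arc_strand_def by auto
  from S have LS: "length LS = length S" "set LS = {..<length S}" "LS \<noteq> []" "strand S LS"
    "map (\<lambda>i. snd (S ! i)) LS = sS"
    and exit: "is_cup (snd (S ! last LS))"
      "trace is_cap (rev (take (last LS) S)) (out_leg (S ! last LS)) = None"
      "trace_pos is_cap (rev (take (last LS) S)) (out_leg (S ! last LS)) = qS"
    unfolding arc_strand_def by auto
  have last_LS: "last LS < length S"
    using LS(2,3) last_in_set by blast
  have "strand D ?MF" "strand D ?MS"
    using strand_embed[OF LF(4), of BF CF] strand_embed[OF LS(4), of BS CS] LF(2) LS(2) D by simp_all
  then have "strand D (?MF @ [0] @ ?MS)"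
    using to_cap from_cap LF(3) LS(3) by (simp add: successively_append_iff successively_Cons last_map hd_map)
  moreover have "map (\<lambda>i. snd (D ! i)) ?MF = sF"
    unfolding D(1) LF(5)[symmetric] using LF(2) by (simp add: nth_append)
  moreover have "map (\<lambda>i. snd (D ! i)) ?MS = sS"
    unfolding D(2) LS(5)[symmetric] using LS(2) by (simp add: nth_append)
  moreover have "set (?MF @ [0] @ ?MS) = {..<length D}"
    using LF(2) LS(2) cover by auto
  moreover have "hd (?MF @ [0] @ ?MS) = length BF + hd LF" "last (?MF @ [0] @ ?MS) = length BS + last LS"
    using LF(3) LS(3) by (simp_all add: hd_map last_map)
  moreover have "take (length BS + last LS) D = BS @ take (last LS) S" "D ! (length BS + last LS) = S ! last LS"
    using D(2) last_LS by (simp_all add: nth_append)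
  ultimately show ?thesis
    using LF(1) LS(1) len enter exit leave
    unfolding arc_strand_def by (simp add: trace_append trace_pos_append)
qed

lemma lessThan_Suc_add_decomp:
  "insert 0 (Suc ` {..<m} \<union> (+) (Suc m) ` {..<n}) = {..<Suc (m + n)}"
proof -
  have "x \<in> insert 0 (Suc ` {..<m} \<union> (+) (Suc m) ` {..<n})" if "x < Suc (m + n)" for x
  proof (cases x)
    case (Suc y)
    with that show ?thesis
      by (cases "y < m") (auto intro!: image_eqI[where x = "y - m"])
  qed simp
  then show ?thesis by auto
qed

text \<open>In both join shapes the cap (c, g) is the bottom layer, the arc A1 lies directly above it
  and A2 on top; A1 joins one leg of the cap to one of the two endpoint wires.  The strand runs
  through A1, the cap and A2 in this order (bottom first) or through A2, the cap and A1 (top first).\<close>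

lemma arc_join_bottom_first:
  assumes A1: "arc A1 b1 up1 L1 s1" and A2: "arc A2 b up L2 s2" and g: "is_cap g"
    and bounds: "b \<le> c" "c \<le> b + 2" "b \<le> b1" "b1 \<le> b + 2"
    and typing: "\<And>u v. length u = b \<Longrightarrow> apply_layer (c, g) (u @ [up, \<not> up] @ v) =
      Some (take b1 (u @ [up, \<not> up] @ v) @ [up1, \<not> up1] @ drop b1 (u @ [up, \<not> up] @ v))"
    and enter: "trace is_cup ((c, g) # A1) (b + of_bool (\<not> up)) = Some (Suc (hd L1))"
    and to_cap: "trace is_cap [(c, g)] (b1 + of_bool up1) = Some 0"
    and from_cap: "trace is_cup (A1 @ A2) (out_leg (c, g)) = Some (length A1 + hd L2)"
    and leave: "trace is_cap (rev A1 @ [(c, g)]) (b + of_bool up) = None"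
      "trace_pos is_cap (rev A1 @ [(c, g)]) (b + of_bool up) = b + of_bool up"
  shows "\<exists>L. arc ((c, g) # A1 @ A2) b up L (s1 @ [g] @ s2)"
proof -
  let ?D = "(c, g) # A1 @ A2"
  from A1 A2 have strands: "arc_strand A1 (b1 + of_bool (\<not> up1)) (b1 + of_bool up1) L1 s1"
    "arc_strand A2 (b + of_bool (\<not> up)) (b + of_bool up) L2 s2"
    unfolding arc_def by simp_all
  have last_L1: "last L1 < length A1" and exit1:
    "is_cup (snd (A1 ! last L1))" "trace is_cap (rev (take (last L1) A1)) (out_leg (A1 ! last L1)) = None"
    "trace_pos is_cap (rev (take (last L1) A1)) (out_leg (A1 ! last L1)) = b1 + of_bool up1"
    using strands(1) last_in_set unfolding arc_strand_def by auto
  have "arc_strand ?D (b + of_bool (\<not> up)) (b + of_bool up)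
    (map ((+) (length [(c, g)])) L1 @ [0] @ map ((+) (length ((c, g) # A1))) L2) (s1 @ [snd (?D ! 0)] @ s2)"
  proof (rule arc_strand_join[OF strands])
    show "insert 0 ((+) (length [(c, g)]) ` {..<length A1} \<union> (+) (length ((c, g) # A1)) ` {..<length A2}) =
        {..<length ?D}"
      using lessThan_Suc_add_decomp[of "length A1" "length A2"] by simp
    show "next_layer ?D (length [(c, g)] + last L1) = Some 0"
      using next_layer_leave[OF last_L1 exit1(1,2), of "[(c, g)]" A2] exit1(3) to_cap by simp
    show "next_layer ?D 0 = Some (length ((c, g) # A1) + hd L2)"
      using next_layer_cap[of ?D 0] g from_cap by simp
    show "trace is_cup ?D (b + of_bool (\<not> up)) = Some (length [(c, g)] + hd L1)"
      using trace_append[of is_cup "(c, g) # A1" A2] enter by simp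
  qed (use leave in simp_all)
  moreover have "arc_typed ?D b [up, \<not> up]"
    using arc_typed_join[of A1 b1 "[up1, \<not> up1]" A2 b "[up, \<not> up]"] A1 A2 bounds typing
    unfolding arc_def by simp
  moreover have "arc_transparent ?D b"
    using arc_transparent_join[OF arc_transparent_if_arc[OF A1] arc_transparent_if_arc[OF A2] g bounds] .
  ultimately show ?thesis
    unfolding arc_def by auto
qed

lemma arc_join_top_first:
  assumes A1: "arc A1 b1 up1 L1 s2" and A2: "arc A2 b up L2 s1" and g: "is_cap g"
    and bounds: "b \<le> c" "c \<le> b + 2" "b \<le> b1" "b1 \<le> b + 2"
    and typing: "\<And>u v. length u = b \<Longrightarrow> apply_layer (c, g) (u @ [up, \<not> up] @ v) =
      Some (take b1 (u @ [up, \<not> up] @ v) @ [up1, \<not> up1] @ drop b1 (u @ [up, \<not> up] @ v))"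
    and enter: "trace is_cup ((c, g) # A1 @ A2) (b + of_bool (\<not> up)) = Some (Suc (length A1 + hd L2))"
    and to_cap: "trace is_cap (rev A1 @ [(c, g)]) (b + of_bool up) = Some (length A1)"
    and from_cap: "trace is_cup A1 (out_leg (c, g)) = Some (hd L1)"
    and leave: "trace is_cap [(c, g)] (b1 + of_bool up1) = None"
      "trace_pos is_cap [(c, g)] (b1 + of_bool up1) = b + of_bool up"
  shows "\<exists>L. arc ((c, g) # A1 @ A2) b up L (s1 @ [g] @ s2)"
proof -
  let ?D = "(c, g) # A1 @ A2"
  from A1 A2 have strands: "arc_strand A2 (b + of_bool (\<not> up)) (b + of_bool up) L2 s1"
    "arc_strand A1 (b1 + of_bool (\<not> up1)) (b1 + of_bool up1) L1 s2"
    unfolding arc_def by simp_all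
  have last_L2: "last L2 < length A2" and exit2:
    "is_cup (snd (A2 ! last L2))" "trace is_cap (rev (take (last L2) A2)) (out_leg (A2 ! last L2)) = None"
    "trace_pos is_cap (rev (take (last L2) A2)) (out_leg (A2 ! last L2)) = b + of_bool up"
    using strands(1) last_in_set unfolding arc_strand_def by auto
  have "arc_strand ?D (b + of_bool (\<not> up)) (b + of_bool up)
    (map ((+) (length ((c, g) # A1))) L2 @ [0] @ map ((+) (length [(c, g)])) L1) (s1 @ [snd (?D ! 0)] @ s2)"
  proof (rule arc_strand_join[OF strands])
    show "insert 0 ((+) (length ((c, g) # A1)) ` {..<length A2} \<union> (+) (length [(c, g)]) ` {..<length A1}) =
        {..<length ?D}"
      using lessThan_Suc_add_decomp[of "length A1" "length A2"] by (simp add: Un_commute)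
    show "next_layer ?D (length ((c, g) # A1) + last L2) = Some 0"
      using next_layer_leave[OF last_L2 exit2(1,2), of "(c, g) # A1" "[]"] exit2(3) to_cap by simp
    show "next_layer ?D 0 = Some (length [(c, g)] + hd L1)"
      using next_layer_cap[of ?D 0] g from_cap trace_append[of is_cup A1 A2] by simp
  qed (use enter leave in simp_all)
  moreover have "arc_typed ?D b [up, \<not> up]"
    using arc_typed_join[of A1 b1 "[up1, \<not> up1]" A2 b "[up, \<not> up]"] A1 A2 bounds typing
    unfolding arc_def by simp
  moreover have "arc_transparent ?D b"
    using arc_transparent_join[OF arc_transparent_if_arc[OF A1] arc_transparent_if_arc[OF A2] g bounds] .
  ultimately show ?thesis
    unfolding arc_def by auto
qed

lemma arc_join_pos:
  assumes IH1: "\<And>b. \<exists>A L. arc A b (T s1 = 1) L s1" and IH2: "\<And>b. \<exists>A L. arc A b (T s2 = 1) L s2"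
    and "\<bar>T s1\<bar> = 1" "\<bar>T s2\<bar> = 1" "is_cap g" "T s1 + turn g + T s2 = 1"
  shows "\<exists>A L. arc A b True L (s1 @ [g] @ s2)"
proof -
  consider "T s1 = 1" "T s2 = 1" "g = CapL" | "T s1 = -1" "T s2 = 1" "g = CapR" | "T s1 = 1" "T s2 = -1" "g = CapR"
    using assms(3-6) by (cases g) (auto simp: abs_if split: if_split_asm)
  then show ?thesis
  proof cases
    case 1
    with IH1 IH2 obtain A1 L1 A2 L2 where A1: "arc A1 b True L1 s1" and A2: "arc A2 b True L2 s2"
      by fastforce
    have "\<exists>L. arc ((Suc b, CapL) # A1 @ A2) b True L (s1 @ [CapL] @ s2)"
      by (rule arc_join_bottom_first[OF A1 A2])
        (auto simp: arc_traces[OF A1, simplified] arc_traces[OF A2, simplified] trace_append trace_pos_append)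
    with 1 show ?thesis by blast
  next
    case 2
    with IH1 IH2 obtain A1 L1 A2 L2 where A1: "arc A1 (Suc b) False L1 s1" and A2: "arc A2 b True L2 s2"
      by fastforce
    have "\<exists>L. arc ((b, CapR) # A1 @ A2) b True L (s1 @ [CapR] @ s2)"
      by (rule arc_join_bottom_first[OF A1 A2])
        (auto simp: arc_traces[OF A1, simplified] arc_traces[OF A2, simplified] trace_append trace_pos_append)
    with 2 show ?thesis by blast
  next
    case 3
    with IH1 IH2 obtain A1 L1 A2 L2 where A1: "arc A1 (Suc b) False L1 s2" and A2: "arc A2 b True L2 s1"
      by fastforce
    have "\<exists>L. arc ((b + 2, CapR) # A1 @ A2) b True L (s1 @ [CapR] @ s2)"
      by (rule arc_join_top_first[OF A1 A2])
        (auto simp: arc_traces[OF A1, simplified] arc_traces[OF A2, simplified] trace_append trace_pos_append)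
    with 3 show ?thesis by blast
  qed
qed

lemma arc_join_neg:
  assumes IH1: "\<And>b. \<exists>A L. arc A b (T s1 = 1) L s1" and IH2: "\<And>b. \<exists>A L. arc A b (T s2 = 1) L s2"
    and "\<bar>T s1\<bar> = 1" "\<bar>T s2\<bar> = 1" "is_cap g" "T s1 + turn g + T s2 = -1"
  shows "\<exists>A L. arc A b False L (s1 @ [g] @ s2)"
proof -
  consider "T s1 = -1" "T s2 = -1" "g = CapR" | "T s1 = 1" "T s2 = -1" "g = CapL" | "T s1 = -1" "T s2 = 1" "g = CapL"
    using assms(3-6) by (cases g) (auto simp: abs_if split: if_split_asm)
  then show ?thesis
  proof cases
    case 1
    with IH1 IH2 obtain A1 L1 A2 L2 where A1: "arc A1 (b + 2) False L1 s1" and A2: "arc A2 b False L2 s2"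
      by fastforce
    have "\<exists>L. arc ((Suc b, CapR) # A1 @ A2) b False L (s1 @ [CapR] @ s2)"
      by (rule arc_join_bottom_first[OF A1 A2])
        (auto simp: arc_traces[OF A1, simplified] arc_traces[OF A2, simplified] trace_append trace_pos_append)
    with 1 show ?thesis by blast
  next
    case 2
    with IH1 IH2 obtain A1 L1 A2 L2 where A1: "arc A1 (Suc b) True L1 s1" and A2: "arc A2 b False L2 s2"
      by fastforce
    have "\<exists>L. arc ((b + 2, CapL) # A1 @ A2) b False L (s1 @ [CapL] @ s2)"
      by (rule arc_join_bottom_first[OF A1 A2])
        (auto simp: arc_traces[OF A1, simplified] arc_traces[OF A2, simplified] trace_append trace_pos_append)
    with 2 show ?thesis by blast
  next
    case 3
    with IH1 IH2 obtain A1 L1 A2 L2 where A1: "arc A1 (Suc b) True L1 s2" and A2: "arc A2 b False L2 s1"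
      by fastforce
    have "\<exists>L. arc ((b, CapL) # A1 @ A2) b False L (s1 @ [CapL] @ s2)"
      by (rule arc_join_top_first[OF A1 A2])
        (auto simp: arc_traces[OF A1, simplified] arc_traces[OF A2, simplified] trace_append trace_pos_append)
    with 3 show ?thesis by blast
  qed
qed

section \<open>Cap-cup words of arcs\<close>

lemma T_Nil [simp]: "T [] = 0"
  and T_Cons [simp]: "T (x # xs) = turn x + T xs"
  and T_append [simp]: "T (xs @ ys) = T xs + T ys"
  unfolding T_def by simp_all

lemma turn_cases: "turn g = 1 \<or> turn g = -1"
  by (cases g) auto

lemma T_parity: "even (T xs + int (length xs))"
proof (induction xs)
  case (Cons x xs)
  then show ?case
    using turn_cases[of x] by (auto simp: algebra_simps)
qed simp

lemma T_take_Suc: "k < length s \<Longrightarrow> T (take (Suc k) s) = T (take k s) + turn (s ! k)"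
  by (simp add: take_Suc_conv_app_nth)

definition arc_sequence :: "gen list \<Rightarrow> bool" where
  "arc_sequence s \<longleftrightarrow> odd (length s) \<and> (\<forall>i < length s. is_cap (s ! i) \<longleftrightarrow> odd i)"

lemma arc_sequence_split_pos:
  assumes s: "arc_sequence s" and len: "3 \<le> length s" and T: "T s = 1"
  obtains j where "odd j" "j + 1 < length s" "\<bar>T (take j s)\<bar> = 1" "\<bar>T (drop (Suc j) s)\<bar> = 1"
proof -
  txt \<open>If some odd prefix has turning number 1, cut at the cap that follows it.  Otherwise all
    prefix sums stay non-positive, which forces the cut at the last cap to work.\<close>
  let ?P = "\<lambda>k. T (take k s)"
  have odd_len: "odd (length s)"
    using s unfolding arc_sequence_def by simp
  have T_drop: "T (drop k s) = 1 - ?P k" for k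
    using T append_take_drop_id[of k s] T_append[of "take k s" "drop k s"] by simp
  have odd_P: "odd (?P k)" if "odd k" "k \<le> length s" for k
    using T_parity[of "take k s"] that by simp
  show ?thesis
  proof (cases "\<exists>j. odd j \<and> j + 1 < length s \<and> ?P j = 1")
    case True
    then obtain j where j: "odd j" "j + 1 < length s" "?P j = 1"
      by blast
    then have "T (drop (Suc j) s) = - turn (s ! j)"
      using T_drop[of "Suc j"] T_take_Suc[of j s] by simp
    then show ?thesis
      using that[OF j(1,2)] j(3) turn_cases[of "s ! j"] by auto
  next
    case False
    have nonpos: "k < length s \<Longrightarrow> ?P k \<le> 0" for k
    proof (induction k)
      case (Suc k)
      have "?P k \<le> 0" "?P (Suc k) = ?P k + turn (s ! k)"
        using Suc T_take_Suc[of k s] by simp_all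
      moreover have "?P (Suc k) \<noteq> 1" if "odd (Suc k)"
      proof -
        have "Suc k + 1 < length s"
          using that Suc.prems odd_len by presburger
        then show ?thesis
          using False that by blast
      qed
      moreover have "?P k \<noteq> 0" if "odd k"
        using odd_P[OF that] Suc.prems by fastforce
      ultimately show ?case
        using turn_cases[of "s ! k"] by fastforce
    qed simp
    define j where "j = length s - 2"
    have j: "odd j" "j + 1 < length s" "Suc (Suc j) = length s"
      using odd_len len unfolding j_def by presburger+
    have "?P (Suc j) = 0"
      using nonpos[of "Suc j"] T_take_Suc[of "Suc j" s] j T turn_cases[of "s ! Suc j"] by auto
    moreover have "?P j = -1"
      using nonpos[of j] odd_P[of j] T_take_Suc[of j s] j calculation turn_cases[of "s ! j"] by fastforce
    ultimately show ?thesis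
      using that[OF j(1,2)] T_drop[of "Suc j"] by simp
  qed
qed

fun flip :: "gen \<Rightarrow> gen" where
  "flip CapL = CapR" | "flip CapR = CapL" | "flip CupL = CupR" | "flip CupR = CupL"

lemma is_cap_flip [simp]: "is_cap (flip g) = is_cap g"
  by (cases g) auto

lemma T_map_flip [simp]: "T (map flip s) = - T s"
proof -
  have "turn (flip g) = - turn g" for g
    by (cases g) auto
  then show ?thesis
    by (induction s) auto
qed

lemma arc_sequence_split:
  assumes s: "arc_sequence s" and len: "3 \<le> length s" and T: "\<bar>T s\<bar> = 1"
  obtains j where "odd j" "j + 1 < length s" "\<bar>T (take j s)\<bar> = 1" "\<bar>T (drop (Suc j) s)\<bar> = 1"
proof (cases "T s = 1")
  case True
  then show ?thesis
    using arc_sequence_split_pos[OF s len] that by blast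
next
  case False
  then have "T (map flip s) = 1" "arc_sequence (map flip s)"
    using T s unfolding arc_sequence_def by auto
  then show ?thesis
    using arc_sequence_split_pos[of "map flip s"] len that by (auto simp: take_map drop_map)
qed

lemma arc_sequence_take:
  "arc_sequence s \<Longrightarrow> odd j \<Longrightarrow> j < length s \<Longrightarrow> arc_sequence (take j s)"
  unfolding arc_sequence_def by auto

lemma arc_sequence_drop:
  "arc_sequence s \<Longrightarrow> odd j \<Longrightarrow> j < length s \<Longrightarrow> arc_sequence (drop (Suc j) s)"
  unfolding arc_sequence_def by auto

lemma arc_exists:
  assumes "arc_sequence s" "\<bar>T s\<bar> = 1"
  shows "\<exists>A L. arc A b (T s = 1) L s"
  using assms
proof (induction "length s" arbitrary: s b rule: less_induct)
  case less
  show ?case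
  proof (cases "length s < 3")
    case True
    moreover have "odd (length s)"
      using less.prems(1) unfolding arc_sequence_def by simp
    ultimately obtain g where s: "s = [g]" and "is_cup g"
      using less.prems(1) unfolding arc_sequence_def by (cases s) (auto simp: less_Suc_eq)
    then have "arc [(b, g)] b (turn g = 1) [0] [g]"
      by (intro arc_cup) (cases g; simp)+
    then show ?thesis
      using s by auto
  next
    case False
    then have "3 \<le> length s"
      by simp
    then obtain j where j: "odd j" "j + 1 < length s" "\<bar>T (take j s)\<bar> = 1" "\<bar>T (drop (Suc j) s)\<bar> = 1"
      using arc_sequence_split[OF less.prems(1) _ less.prems(2)] by blast
    define s1 s2 where "s1 = take j s" and "s2 = drop (Suc j) s"
    have s: "s = s1 @ [s ! j] @ s2"
      using id_take_nth_drop[of j s] j(2) unfolding s1_def s2_def by simp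
    have cap: "is_cap (s ! j)"
      using less.prems(1) j(1,2) unfolding arc_sequence_def by simp
    have IH: "\<exists>A L. arc A b (T s1 = 1) L s1" "\<exists>A L. arc A b (T s2 = 1) L s2" for b
      using less.hyps[of s1] less.hyps[of s2] arc_sequence_take[OF less.prems(1) j(1)]
        arc_sequence_drop[OF less.prems(1) j(1)] j unfolding s1_def s2_def by auto
    have T_s: "T s = T s1 + turn (s ! j) + T s2"
      by (subst s) simp
    show ?thesis
    proof (cases "T s = 1")
      case True
      then show ?thesis
        using arc_join_pos[OF IH j(3,4)[folded s1_def s2_def] cap] T_s s by simp
    next
      case False
      then have "T s = -1"
        using less.prems(2) by (simp add: abs_if split: if_split_asm)
      then show ?thesis
        using arc_join_neg[OF IH j(3,4)[folded s1_def s2_def] cap] T_s s False by simp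
    qed
  qed
qed

section \<open>Closing an arc into a knot\<close>

lemma cap_cup_cycle_is_cap_iff:
  assumes c: "cap_cup_cycle c" and i: "i < length c" "is_cap (c ! i)"
  shows "is_cap (c ! ((i + m) mod length c)) \<longleftrightarrow> even m"
proof (induction m)
  case (Suc m)
  have "(i + m) mod length c < length c"
    using i by (intro mod_less_divisor) linarith
  then have "is_cap (c ! ((i + m) mod length c)) \<longleftrightarrow> \<not> is_cap (c ! ((i + Suc m) mod length c))"
    using c unfolding cap_cup_cycle_def by (metis add_Suc_right mod_Suc_eq Suc_eq_plus1)
  with Suc show ?case
    unfolding even_Suc by blast
qed (use i in simp)

lemma cap_cup_cycle_rotate:
  assumes c: "cap_cup_cycle c" and i: "i < length c" "is_cap (c ! i)"
  shows "rotate i c = c ! i # tl (rotate i c)" "arc_sequence (tl (rotate i c))"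
proof -
  show "rotate i c = c ! i # tl (rotate i c)"
    using i hd_rotate_conv_nth[of c i] by (metis list.collapse list.size(3) not_less0 rotate_is_Nil_conv mod_less)
  have "even (length c)"
    using cap_cup_cycle_is_cap_iff[OF assms, of "length c"] i by simp
  moreover have "is_cap (tl (rotate i c) ! m) \<longleftrightarrow> odd m" if "m < length c - 1" for m
    using cap_cup_cycle_is_cap_iff[OF assms, of "Suc m"] that by (simp add: nth_tl nth_rotate)
  ultimately show "arc_sequence (tl (rotate i c))"
    using i unfolding arc_sequence_def by auto
qed

lemma T_rotate: "T (rotate i c) = T c"
proof -
  have "T c = T (take (i mod length c) c) + T (drop (i mod length c) c)"
    by (metis T_append append_take_drop_id)
  then show ?thesis by (simp add: rotate_drop_take)
qed

lemma T_alternating_sign: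
  assumes "\<forall>m < length r. is_cap (r ! m) \<longleftrightarrow> even m" "\<forall>g \<in> set r. is_cap g \<longrightarrow> turn g = t" "\<bar>t\<bar> = 1"
  shows "0 \<le> t * T r"
  using assms(1,2)
proof (induction r rule: induct_list012)
  case (3 x y zs)
  have "\<forall>m < length zs. is_cap (zs ! m) \<longleftrightarrow> even m"
    using "3.prems"(1) by (metis Suc_less_eq even_Suc length_Cons nth_Cons_Suc)
  then have "0 \<le> t * T zs"
    using "3.IH"(1) "3.prems"(2) by simp
  moreover have "turn x = t"
    using "3.prems" by force
  ultimately show ?case
    using assms(3) turn_cases[of y] by (auto simp: abs_if algebra_simps split: if_split_asm)
qed (use assms(3) in \<open>auto simp: abs_if\<close>)

lemma cap_cup_cycle_obtain_cap:
  assumes c: "cap_cup_cycle c" and T: "T c = 2 \<or> T c = -2"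
  obtains i where "i < length c" "is_cap (c ! i)" "2 * turn (c ! i) = T c"
proof -
  have n: "0 < length c"
    using T by (cases c) auto
  then have "is_cap (c ! 0) \<or> is_cap (c ! (1 mod length c))"
    using c unfolding cap_cup_cycle_def by auto
  moreover have "1 mod length c < length c"
    using n by (rule mod_less_divisor)
  ultimately obtain i0 where i0: "i0 < length c" "is_cap (c ! i0)"
    using n by blast
  txt \<open>Otherwise every cap turns against T c, so each cap together with the cup after it
    contributes 0 or -T c to T c, which is absurd.\<close>
  have "\<exists>i < length c. is_cap (c ! i) \<and> 2 * turn (c ! i) = T c"
  proof (rule ccontr)
    assume none: "\<not> ?thesis"
    define t where "t = - (T c div 2)"
    have "\<forall>g \<in> set (rotate i0 c). is_cap g \<longrightarrow> turn g = t"
    proof (intro ballI impI)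
      fix g
      assume "g \<in> set (rotate i0 c)" "is_cap g"
      with none have "2 * turn g \<noteq> T c"
        by (auto simp: in_set_conv_nth)
      then show "turn g = t"
        using T turn_cases[of g] unfolding t_def by auto
    qed
    moreover have "\<forall>m < length (rotate i0 c). is_cap (rotate i0 c ! m) \<longleftrightarrow> even m"
      using cap_cup_cycle_is_cap_iff[OF c i0] by (simp add: nth_rotate)
    moreover have "\<bar>t\<bar> = 1"
      using T unfolding t_def by auto
    ultimately have "0 \<le> t * T (rotate i0 c)"
      by (intro T_alternating_sign)
    then show False
      using T T_rotate[of i0 c] unfolding t_def by auto
  qed
  with that show ?thesis
    by blast
qed

lemma knot_if_strand:
  assumes "endo_I d" "strand d M" "M \<noteq> []" "hd M = 0" "length M = length d" "set M = {..<length d}"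
  shows "knot d" "ccc_list d = map (\<lambda>i. snd (d ! i)) M"
proof -
  have orbit: "(next_gen d ^^ m) 0 = M ! m" if "m < length M" for m
    using funpow_next_gen_strand[OF assms(2,3) that] assms(4) by simp
  have "\<exists>m. (next_gen d ^^ m) 0 = j" if j: "j < length d" for j
  proof -
    obtain m where "m < length M" "M ! m = j"
      using j assms(6) in_set_conv_nth[of j M] by auto
    with orbit show ?thesis by auto
  qed
  then show "knot d"
    using assms(1,3,5) unfolding knot_def by auto
  show "ccc_list d = map (\<lambda>i. snd (d ! i)) M"
    unfolding ccc_list_def using orbit assms(5) by (intro nth_equalityI) auto
qed

lemma knot_cap_arc:
  assumes A: "arc A 0 up L s" and g: "is_cap g" "gcod g = [up, \<not> up]"
  shows "knot ((0, g) # A)" "ccc_list ((0, g) # A) = g # s"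
proof -
  let ?D = "(0, g) # A" and ?M = "0 # map Suc L"
  from A have typed: "arc_typed A 0 [up, \<not> up]" and "arc_strand A (of_bool (\<not> up)) (of_bool up) L s"
    unfolding arc_def by simp_all
  then have L: "length L = length A" "set L = {..<length A}" "L \<noteq> []" "strand A L"
    "map (\<lambda>i. snd (A ! i)) L = s" "trace is_cup A (of_bool (\<not> up)) = Some (hd L)"
    unfolding arc_strand_def by auto
  have "out_leg (0, g) = of_bool (\<not> up)"
    using g by (cases g) auto
  then have "next_layer ?D 0 = Some (Suc (hd L))"
    using next_layer_cap[of ?D 0] g(1) L(6) by simp
  moreover have "strand ?D (map Suc L)"
    using strand_embed[OF L(4), of "[(0, g)]" "[]"] L(2) by (simp flip: One_nat_def add: plus_1_eq_Suc)
  ultimately have "strand ?D ?M"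
    using L(3) by (simp add: successively_Cons hd_map)
  moreover have "endo_I ?D"
  proof -
    have "apply_layer (0, g) [] = Some [up, \<not> up]"
      using g by (cases g) auto
    moreover have "apply_diag A [up, \<not> up] = Some []"
      using typed unfolding arc_typed_def by (metis append_Nil append_Nil2 list.size(3))
    ultimately show ?thesis
      unfolding endo_I_def by simp
  qed
  moreover have "set ?M = {..<length ?D}"
    using L(2) by (simp add: lessThan_Suc_eq_insert_0)
  moreover have "map (\<lambda>i. snd (?D ! i)) ?M = g # s"
    using L(5) by (simp add: comp_def)
  ultimately show "knot ?D" "ccc_list ?D = g # s"
    using knot_if_strand[of ?D ?M] L(1) by simp_all
qed

theorem mainTheorem3:
  fixes c :: "gen list"
  assumes "cap_cup_cycle c" and "T c = 2 \<or> T c = -2"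
  shows "\<exists>d :: layer list. knot d \<and> ccc_eq d c"
proof -
  obtain i where i: "i < length c" "is_cap (c ! i)" and turn: "2 * turn (c ! i) = T c"
    using cap_cup_cycle_obtain_cap[OF assms] .
  let ?s = "tl (rotate i c)"
  have rot: "rotate i c = c ! i # ?s" and seq: "arc_sequence ?s"
    using cap_cup_cycle_rotate[OF assms(1) i] by simp_all
  have "T c = turn (c ! i) + T ?s"
    using arg_cong[OF rot, of T] T_rotate[of i c] by simp
  then have T_s: "T ?s = turn (c ! i)"
    using turn by simp
  then obtain A L where A: "arc A 0 (T ?s = 1) L ?s"
    using arc_exists[OF seq] turn_cases[of "c ! i"] by fastforce
  have "gcod (c ! i) = [T ?s = 1, T ?s \<noteq> 1]"
    using i(2) T_s by (cases "c ! i") auto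
  then have knot: "knot ((0, c ! i) # A)" and ccc: "ccc_list ((0, c ! i) # A) = rotate i c"
    using knot_cap_arc[OF A i(2)] rot by simp_all
  have "rotate (length c - i) (ccc_list ((0, c ! i) # A)) = c"
    using ccc i(1) by (simp add: rotate_rotate)
  with knot show ?thesis
    unfolding ccc_eq_def by blast
qed

end
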